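(* Let $K \le L$ be positive integers, $N = L+K$, and let $\mathbf{P}_d \in \mathbb{C}^{L\times K}$ be an arbitrary (fully digital) beamforming matrix with singular value decomposition $\mathbf{P}_d = \mathbf{U}\mathbf{S}\mathbf{V}^\mathsf{H}$, where $\mathbf{U} = [\mathbf{U}_1, \mathbf{U}_2] \in \mathbb{C}^{L\times L}$ is unitary with $\mathbf{U}_1 \in \mathbb{C}^{L\times K}$, $\mathbf{U}_2 \in \mathbb{C}^{L\times (L-K)}$, $\mathbf{S} \in \mathbb{R}^{L\times K}$ is a rectangular diagonal matrix with nonnegative diagonal entries $s_1,\dots,s_K$, and $\mathbf{V}\in\mathbb{C}^{K\times K}$ is unitary. Define $$\boldsymbol\Theta^\star = \begin{bmatrix} \mathbf{0}_{K\times K} & \mathbf{V}^* \\ \mathbf{V}^\mathsf{H} & \mathbf{0}_{K\times K}\end{bmatrix}\in\mathbb{C}^{2K\times 2K},\qquad \boldsymbol\Phi^\star = \begin{bmatrix} \mathbf{0}_{K\times K} & \mathbf{U}_1^\mathsf{T} \\ \mathbf{U}_1 & -\mathbf{U}_2\mathbf{U}_2^\mathsf{T}\end{bmatrix}\in\mathbb{C}^{N\times N},$$ and $(\mathbf{P}^\star)^{1/2} = 4\,\operatorname{diag}(s_1,\dots,s_K)\in\mathbb{R}^{K\times K}$. Then $\boldsymbol\Theta^\star$ and $\boldsymbol\Phi^\star$ are feasible scattering matrices of lossless reciprocal MiLACs, i.e. $(\boldsymbol\Theta^\star)^\mathsf{H}\boldsymbol\Theta^\star = \mathbf{I}_{2K}$,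 $\boldsymbol\Theta^\star = (\boldsymbol\Theta^\star)^\mathsf{T}$, $(\boldsymbol\Phi^\star)^\mathsf{H}\boldsymbol\Phi^\star = \mathbf{I}_{N}$, $\boldsymbol\Phi^\star = (\boldsymbol\Phi^\star)^\mathsf{T}$; the corresponding analog beamformers are $$\mathbf{F}^\star = \tfrac12[\boldsymbol\Theta^\star]_{K+1:2K,\,1:K} = \tfrac12\mathbf{V}^\mathsf{H},\qquad \mathbf{W}^\star = \tfrac12[\boldsymbol\Phi^\star]_{K+1:N,\,1:K} = \tfrac12\mathbf{U}_1;$$ and the effective two-layer MiLAC beamforming matrix satisfies $\mathbf{G} := \mathbf{W}^\star(\mathbf{P}^\star)^{1/2}\mathbf{F}^\star = \mathbf{P}_d$. Hence the two-layer MiLAC architecture can exactly realize any fully digital beamformer.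
   Context: Setting: a base station with $L$ antennas serves $K$ single-antenna users. In the two-layer MiLAC (microwave linear analog computer) transmitter, the symbol vector $\mathbf{s}\in\mathbb{C}^K$ is mapped to the transmit signal $\mathbf{x} = \mathbf{W}\mathbf{P}^{1/2}\mathbf{F}\mathbf{s}$, where: MiLAC 1 is a $2K$-port lossless reciprocal microwave network with scattering matrix $\boldsymbol\Theta\in\mathbb{C}^{2K\times 2K}$ and analog beamformer $\mathbf{F} = \tfrac12[\boldsymbol\Theta]_{K+1:2K,1:K}$ (rows $K+1$ to $2K$, columns $1$ to $K$); MiLAC 2 is an $N=(L+K)$-port lossless reciprocal network with scattering matrix $\boldsymbol\Phi\in\mathbb{C}^{N\times N}$ and analog beamformer $\mathbf{W} = \tfrac12[\boldsymbol\Phi]_{K+1:N,1:K}$; and $\mathbf{P}^{1/2} = \operatorname{diag}(\sqrt{p_1},\dots,\sqrt{p_K})$ is the diagonal amplifier power-allocation matrix. Losslessness and reciprocity mean the scattering matrices are unitary and symmetric: $\boldsymbol\Theta^\mathsf{H}\boldsymbol\Theta = \mathbf{I}$, $\boldsymbol\Theta = \boldsymbol\Theta^\mathsf{T}$, and likewise for $\boldsymbol\Phi$. $(\cdot)^*$ is entrywise complex conjugate, $(\cdot)^\mathsf{T}$ transpose, $(\cdot)^\mathsf{H}$ conjugate transpose. *)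

theory Defs
  imports "HOL-Analysis.Analysis" "Jordan_Normal_Form.Matrix"
begin

definition conj_mat :: "complex mat \<Rightarrow> complex mat" where
  "conj_mat A = map_mat cnj A"

definition herm :: "complex mat \<Rightarrow> complex mat" where
  "herm A = conj_mat (transpose_mat A)"

definition unitary_mat :: "nat \<Rightarrow> complex mat \<Rightarrow> bool" where
  "unitary_mat n A \<longleftrightarrow> A \<in> carrier_mat n n \<and> herm A * A = 1\<^sub>m n \<and> A * herm A = 1\<^sub>m n"

text \<open>Sub-block of rows r0..r0+nr-1 and columns c0..c0+nc-1 (0-based indexing).
  The paper's 1-based block [A]_{a:b, c:d} is  sub_block A (a-1) (b-a+1) (c-1) (d-c+1).\<close>
definition sub_block :: "'a mat \<Rightarrow> nat \<Rightarrow> nat \<Rightarrow> nat \<Rightarrow> nat \<Rightarrow> 'a mat" where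
  "sub_block A r0 nr c0 nc = mat nr nc (\<lambda>(i,j). A $$ (r0 + i, c0 + j))"

definition lossless_reciprocal :: "nat \<Rightarrow> complex mat \<Rightarrow> bool" where
  "lossless_reciprocal n A \<longleftrightarrow> A \<in> carrier_mat n n \<and> herm A * A = 1\<^sub>m n \<and> A = transpose_mat A"

end

theory Submission
  imports Defs
begin

(* Both scattering matrices are instances of one construction. If [A1 A2] is unitary, then
   [[0, A1^T], [A1, -A2 A2^T]] is symmetric, so its adjoint is its entrywise conjugate, and the
   block product of the conjugate with the matrix collapses to the identity by the orthogonality
   relations A1^H A1 = I, A1^H A2 = 0, A2^H A2 = I and the conjugated completeness relation
   A1 A1^H + A2 A2^H = I. Phi* is the case A1 = U1, A2 = U2; Theta* is the case A1 = V^H with an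
   empty A2 (K x 0), for which -A2 A2^T = 0.
   The lower left blocks of Theta* and Phi* are V^H and U1, so
   G = (1/2) U1 (4 diag s) (1/2) V^H = U1 diag(s) V^H = U S V^H, as S vanishes off its leading
   diagonal. *)

lemma uminus_zero_mat [simp]: "- 0\<^sub>m n m = (0\<^sub>m n m :: 'a :: group_add mat)"
  by (rule eq_matI) auto

lemma smult_smult_mat: "a \<cdot>\<^sub>m (b \<cdot>\<^sub>m A) = (a * b :: 'a :: semigroup_mult) \<cdot>\<^sub>m A"
  by (rule eq_matI) (auto simp: mult.assoc)

lemma one_smult_mat [simp]: "(1 :: 'a :: monoid_mult) \<cdot>\<^sub>m A = A"
  by (rule eq_matI) auto

lemma conj_mat_dims [simp]: "dim_row (conj_mat A) = dim_row A" "dim_col (conj_mat A) = dim_col A"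
  by (simp_all add: conj_mat_def)

lemma conj_mat_carrier_iff [simp]: "conj_mat A \<in> carrier_mat n m \<longleftrightarrow> A \<in> carrier_mat n m"
  unfolding carrier_mat_def by simp

lemma index_conj_mat [simp]:
  "i < dim_row A \<Longrightarrow> j < dim_col A \<Longrightarrow> conj_mat A $$ (i, j) = cnj (A $$ (i, j))"
  by (simp add: conj_mat_def)

lemma herm_dims [simp]: "dim_row (herm A) = dim_col A" "dim_col (herm A) = dim_row A"
  by (simp_all add: herm_def)

lemma herm_carrier_iff [simp]: "herm A \<in> carrier_mat n m \<longleftrightarrow> A \<in> carrier_mat m n"
  unfolding carrier_mat_def by auto

lemma index_herm [simp]:
  "i < dim_col A \<Longrightarrow> j < dim_row A \<Longrightarrow> herm A $$ (i, j) = cnj (A $$ (j, i))"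
  by (simp add: herm_def)

lemma conj_mat_add:
  "A \<in> carrier_mat n m \<Longrightarrow> B \<in> carrier_mat n m \<Longrightarrow> conj_mat (A + B) = conj_mat A + conj_mat B"
  by (rule eq_matI) auto

lemma conj_mat_uminus: "conj_mat (- A) = - conj_mat A"
  by (rule eq_matI) auto

lemma conj_mat_mult:
  "A \<in> carrier_mat n m \<Longrightarrow> B \<in> carrier_mat m p \<Longrightarrow> conj_mat (A * B) = conj_mat A * conj_mat B"
  by (rule eq_matI) (auto simp: scalar_prod_def cnj_sum)

lemma conj_mat_zero [simp]: "conj_mat (0\<^sub>m n m) = 0\<^sub>m n m"
  by (rule eq_matI) auto

lemma conj_mat_one [simp]: "conj_mat (1\<^sub>m n) = 1\<^sub>m n"
  by (rule eq_matI) auto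

lemma herm_herm [simp]: "herm (herm A) = A"
  by (rule eq_matI) auto

lemma conj_mat_transpose: "conj_mat (transpose_mat A) = herm A"
  by (simp add: herm_def)

lemma conj_mat_herm: "conj_mat (herm A) = transpose_mat A"
  by (rule eq_matI) auto

lemma transpose_herm: "transpose_mat (herm A) = conj_mat A"
  by (rule eq_matI) auto

lemma herm_eq_conj_mat_if_symmetric: "transpose_mat A = A \<Longrightarrow> herm A = conj_mat A"
  by (simp add: herm_def)

lemma sub_block_carrier [simp]: "sub_block A r0 nr c0 nc \<in> carrier_mat nr nc"
  by (simp add: sub_block_def)

lemma sub_block_dims [simp]:
  "dim_row (sub_block A r0 nr c0 nc) = nr" "dim_col (sub_block A r0 nr c0 nc) = nc"
  by (simp_all add: sub_block_def)

lemma index_sub_block [simp]: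
  "i < nr \<Longrightarrow> j < nc \<Longrightarrow> sub_block A r0 nr c0 nc $$ (i, j) = A $$ (r0 + i, c0 + j)"
  by (simp add: sub_block_def)

lemma herm_sub_block:
  "r0 + nr \<le> dim_row A \<Longrightarrow> c0 + nc \<le> dim_col A \<Longrightarrow>
   herm (sub_block A r0 nr c0 nc) = sub_block (herm A) c0 nc r0 nr"
  by (rule eq_matI) auto

lemma sub_block_mult:
  assumes "A \<in> carrier_mat n m" "B \<in> carrier_mat m p" "a + r \<le> n" "b + c \<le> p"
  shows "sub_block A a r 0 m * sub_block B 0 m b c = sub_block (A * B) a r b c"
  by (rule eq_matI) (use assms in \<open>auto simp: scalar_prod_def intro!: sum.cong\<close>)

lemma sub_block_one_mat_diag: "a + p \<le> n \<Longrightarrow> sub_block (1\<^sub>m n) a p a p = 1\<^sub>m p"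
  by (rule eq_matI) auto

lemma sub_block_one_mat_disjoint:
  "a + p \<le> b \<or> b + q \<le> a \<Longrightarrow> a + p \<le> n \<Longrightarrow> b + q \<le> n \<Longrightarrow> sub_block (1\<^sub>m n) a p b q = 0\<^sub>m p q"
  by (rule eq_matI) auto

lemma mult_split_inner:
  assumes A: "A \<in> carrier_mat n m" and B: "B \<in> carrier_mat m p" and "k \<le> m"
  shows "sub_block A 0 n 0 k * sub_block B 0 k 0 p + sub_block A 0 n k (m - k) * sub_block B k (m - k) 0 p
    = A * B"
proof (rule eq_matI)
  fix i j assume "i < dim_row (A * B)" "j < dim_col (A * B)"
  with A B have ij: "i < n" "j < p" by auto
  let ?f = "\<lambda>l. A $$ (i, l) * B $$ (l, j)"
  have "(\<Sum>l = 0..<m. ?f l) = (\<Sum>l = 0..<k. ?f l) + (\<Sum>l = k..<m. ?f l)"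
    using \<open>k \<le> m\<close> by (simp add: sum.atLeastLessThan_concat)
  also have "(\<Sum>l = k..<m. ?f l) = (\<Sum>l = 0..<m - k. ?f (k + l))"
    by (subst sum.atLeastLessThan_shift_0) (simp add: comp_def)
  finally show "(sub_block A 0 n 0 k * sub_block B 0 k 0 p
      + sub_block A 0 n k (m - k) * sub_block B k (m - k) 0 p) $$ (i, j) = (A * B) $$ (i, j)"
    using A B ij by (simp add: scalar_prod_def)
qed (use A B in auto)

lemma unitary_mat_column_blocks:
  assumes "unitary_mat n U" and "k \<le> n"
  defines "U1 \<equiv> sub_block U 0 n 0 k" and "U2 \<equiv> sub_block U 0 n k (n - k)"
  shows "herm U1 * U1 = 1\<^sub>m k" "herm U1 * U2 = 0\<^sub>m k (n - k)"
    "herm U2 * U1 = 0\<^sub>m (n - k) k" "herm U2 * U2 = 1\<^sub>m (n - k)"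
    "U1 * herm U1 + U2 * herm U2 = 1\<^sub>m n"
proof -
  have U: "U \<in> carrier_mat n n" and "herm U * U = 1\<^sub>m n" "U * herm U = 1\<^sub>m n"
    using assms(1) by (auto simp: unitary_mat_def)
  have gram: "herm (sub_block U 0 n a p) * sub_block U 0 n b q = sub_block (1\<^sub>m n) a p b q"
    if "a + p \<le> n" "b + q \<le> n" for a p b q
    using that U sub_block_mult[of "herm U" n n U n] \<open>herm U * U = 1\<^sub>m n\<close> by (simp add: herm_sub_block)
  show "herm U1 * U1 = 1\<^sub>m k" "herm U2 * U2 = 1\<^sub>m (n - k)"
    unfolding U1_def U2_def using \<open>k \<le> n\<close> by (simp_all add: gram sub_block_one_mat_diag)
  show "herm U1 * U2 = 0\<^sub>m k (n - k)" "herm U2 * U1 = 0\<^sub>m (n - k) k"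
    unfolding U1_def U2_def using \<open>k \<le> n\<close> by (simp_all add: gram sub_block_one_mat_disjoint)
  show "U1 * herm U1 + U2 * herm U2 = 1\<^sub>m n"
    using mult_split_inner[of U n n "herm U" n k] U \<open>U * herm U = 1\<^sub>m n\<close> \<open>k \<le> n\<close>
    unfolding U1_def U2_def by (simp add: herm_sub_block)
qed

lemma four_block_mat_symmetric:
  assumes "A \<in> carrier_mat k k" "B \<in> carrier_mat n k" "D \<in> carrier_mat n n"
    and "transpose_mat A = A" "transpose_mat D = D"
  shows "transpose_mat (four_block_mat A (transpose_mat B) B D) = four_block_mat A (transpose_mat B) B D"
  using assms by (simp add: transpose_four_block_mat[of _ k k _ n _ n])

lemma conj_mat_completeness:
  assumes "A1 \<in> carrier_mat n k" "A2 \<in> carrier_mat n m" "A1 * herm A1 + A2 * herm A2 = 1\<^sub>m n"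
  shows "conj_mat A1 * transpose_mat A1 + conj_mat A2 * transpose_mat A2 = 1\<^sub>m n"
  using arg_cong[OF assms(3), of conj_mat] assms(1,2)
  by (simp add: conj_mat_add[of _ n n] conj_mat_mult[of _ n k] conj_mat_mult[of _ n m] conj_mat_herm)

lemma lossless_reciprocal_four_block:
  fixes A1 A2 :: "complex mat"
  assumes A1: "A1 \<in> carrier_mat n k" and A2: "A2 \<in> carrier_mat n m"
    and orth: "herm A1 * A1 = 1\<^sub>m k" "herm A1 * A2 = 0\<^sub>m k m" "herm A2 * A1 = 0\<^sub>m m k"
      "herm A2 * A2 = 1\<^sub>m m"
    and complete: "A1 * herm A1 + A2 * herm A2 = 1\<^sub>m n"
  shows "lossless_reciprocal (k + n)
    (four_block_mat (0\<^sub>m k k) (transpose_mat A1) A1 (- (A2 * transpose_mat A2)))"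
    (is "lossless_reciprocal _ ?Phi")
proof -
  have A1T: "transpose_mat A1 \<in> carrier_mat k n" and D: "- (A2 * transpose_mat A2) \<in> carrier_mat n n"
    using A1 A2 by auto
  have carrier: "?Phi \<in> carrier_mat (k + n) (k + n)" using D by simp
  have "transpose_mat (- (A2 * transpose_mat A2)) = - (A2 * transpose_mat A2)"
    using A2 by (simp add: transpose_uminus transpose_mult[of _ n m])
  then have symmetric: "transpose_mat ?Phi = ?Phi"
    using A1 D by (intro four_block_mat_symmetric) auto
  have "herm ?Phi = conj_mat ?Phi"
    by (rule herm_eq_conj_mat_if_symmetric[OF symmetric])
  also have "\<dots> = four_block_mat (0\<^sub>m k k) (herm A1) (conj_mat A1) (- (conj_mat A2 * herm A2))"
    unfolding conj_mat_def[of ?Phi] map_four_block_mat[OF zero_carrier_mat A1T A1 D]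
    using A2 by (simp flip: conj_mat_def add: conj_mat_transpose conj_mat_uminus conj_mat_mult[of _ n m])
  finally have herm_Phi: "herm ?Phi = four_block_mat (0\<^sub>m k k) (herm A1) (conj_mat A1)
    (- (conj_mat A2 * herm A2))" .
  have "herm A1 * (A2 * transpose_mat A2) = 0\<^sub>m k n"
    using A1 A2 orth(2) by (simp flip: assoc_mult_mat[of _ k n _ m _ n])
  then have block12: "herm A1 * - (A2 * transpose_mat A2) = 0\<^sub>m k n"
    using A1 A2 by simp
  have "conj_mat A2 * herm A2 * A1 = 0\<^sub>m n k"
    using A1 A2 orth(3) by (simp add: assoc_mult_mat[of _ n m _ n _ k])
  then have block21: "- (conj_mat A2 * herm A2) * A1 = 0\<^sub>m n k"
    using A1 A2 by simp
  have "conj_mat A2 * herm A2 * (A2 * transpose_mat A2) = conj_mat A2 * (herm A2 * A2 * transpose_mat A2)"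
    using A2 by (simp add: assoc_mult_mat[of _ n m _ n _ n] assoc_mult_mat[of _ m n _ m _ n])
  also have "\<dots> = conj_mat A2 * transpose_mat A2"
    using A2 orth(4) by simp
  moreover note conj_mat_completeness[OF A1 A2 complete]
  ultimately have block22:
    "conj_mat A1 * transpose_mat A1 + - (conj_mat A2 * herm A2) * - (A2 * transpose_mat A2) = 1\<^sub>m n"
    using A2 by simp
  have "herm ?Phi * ?Phi = four_block_mat (0\<^sub>m k k * 0\<^sub>m k k + herm A1 * A1)
      (0\<^sub>m k k * transpose_mat A1 + herm A1 * - (A2 * transpose_mat A2))
      (conj_mat A1 * 0\<^sub>m k k + - (conj_mat A2 * herm A2) * A1)
      (conj_mat A1 * transpose_mat A1 + - (conj_mat A2 * herm A2) * - (A2 * transpose_mat A2))"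
    unfolding herm_Phi using A1 A2
    by (intro mult_four_block_mat[OF zero_carrier_mat _ _ _ zero_carrier_mat A1T A1 D]) auto
  also have "\<dots> = 1\<^sub>m (k + n)"
    using A1 orth(1) block12 block21 block22 by simp
  finally show ?thesis
    using carrier symmetric by (simp add: lossless_reciprocal_def)
qed

lemma sub_block_four_block_mat_lower_left:
  "A \<in> carrier_mat nr nc \<Longrightarrow> C \<in> carrier_mat nr' nc \<Longrightarrow> D \<in> carrier_mat nr' nc' \<Longrightarrow>
   sub_block (four_block_mat A B C D) nr nr' 0 nc = C"
  by (rule eq_matI) auto

lemma mult_rectangular_diagonal:
  assumes U: "U \<in> carrier_mat m n" and S: "S \<in> carrier_mat n k" and "k \<le> n"
    and diagonal: "\<forall>i<n. \<forall>j<k. i \<noteq> j \<longrightarrow> S $$ (i, j) = 0"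
  shows "sub_block U 0 m 0 k * mat k k (\<lambda>(i, j). if i = j then S $$ (i, i) else 0) = U * S"
proof (rule eq_matI)
  fix i j assume "i < dim_row (U * S)" "j < dim_col (U * S)"
  with U S have ij: "i < m" "j < k" by auto
  have "(U * S) $$ (i, j) = (\<Sum>l = 0..<n. U $$ (i, l) * S $$ (l, j))"
    using U S ij by (simp add: scalar_prod_def)
  also have "\<dots> = (\<Sum>l = 0..<n. if l = j then U $$ (i, j) * S $$ (j, j) else 0)"
    by (rule sum.cong) (use diagonal ij in auto)
  also have "\<dots> = (\<Sum>l = 0..<k. if l = j then U $$ (i, j) * S $$ (j, j) else 0)"
    using ij \<open>k \<le> n\<close> by simp
  also have "\<dots> = (\<Sum>l = 0..<k. U $$ (i, l) * (if l = j then S $$ (l, l) else 0))"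
    by (rule sum.cong) auto
  also have "\<dots> = (sub_block U 0 m 0 k * mat k k (\<lambda>(i, j). if i = j then S $$ (i, i) else 0)) $$ (i, j)"
    using U ij by (simp add: scalar_prod_def)
  finally show "(sub_block U 0 m 0 k * mat k k (\<lambda>(i, j). if i = j then S $$ (i, i) else 0)) $$ (i, j)
      = (U * S) $$ (i, j)" ..
qed (use U S in auto)

theorem theorem1:
  fixes K L :: nat
    and Pd U U1 U2 V S :: "complex mat"
  assumes K_pos: "0 < K" and KL: "K \<le> L"
    and Pd_dim: "Pd \<in> carrier_mat L K"
    and U_unit: "unitary_mat L U"
    and V_unit: "unitary_mat K V"
    and S_dim: "S \<in> carrier_mat L K"
    and S_diag: "\<forall>i<L. \<forall>j<K. i \<noteq> j \<longrightarrow> S $$ (i, j) = 0"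
    and S_nonneg: "\<forall>i<K. S $$ (i, i) \<in> \<real> \<and> 0 \<le> Re (S $$ (i, i))"
    and svd: "Pd = U * S * herm V"
    and U1_def: "U1 = sub_block U 0 L 0 K"
    and U2_def: "U2 = sub_block U 0 L K (L - K)"
  defines "Theta \<equiv> four_block_mat (0\<^sub>m K K) (conj_mat V) (herm V) (0\<^sub>m K K)"
    and "Phi \<equiv> four_block_mat (0\<^sub>m K K) (transpose_mat U1) U1 (- (U2 * transpose_mat U2))"
    and "Psqrt \<equiv> mat K K (\<lambda>(i, j). if i = j then 4 * S $$ (i, i) else 0)"
  shows "lossless_reciprocal (2 * K) Theta \<and> lossless_reciprocal (L + K) Phi
         \<and> (let F = (1/2 :: complex) \<cdot>\<^sub>m sub_block Theta K K 0 K;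
                W = (1/2 :: complex) \<cdot>\<^sub>m sub_block Phi K L 0 K
            in F = (1/2 :: complex) \<cdot>\<^sub>m herm V \<and> W = (1/2 :: complex) \<cdot>\<^sub>m U1
               \<and> W * Psqrt * F = Pd)"
proof -
  have U: "U \<in> carrier_mat L L" and V: "V \<in> carrier_mat K K" "V * herm V = 1\<^sub>m K" "herm V * V = 1\<^sub>m K"
    using U_unit V_unit by (auto simp: unitary_mat_def)
  have U1: "U1 \<in> carrier_mat L K" and U2: "U2 \<in> carrier_mat L (L - K)"
    by (simp_all add: U1_def U2_def)
  have "lossless_reciprocal (K + K)
      (four_block_mat (0\<^sub>m K K) (transpose_mat (herm V)) (herm V) (- (0\<^sub>m K 0 * transpose_mat (0\<^sub>m K 0))))"
    by (rule lossless_reciprocal_four_block) (use V in \<open>auto intro: eq_matI\<close>)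
  then have Theta: "lossless_reciprocal (2 * K) Theta"
    using V by (simp add: Theta_def transpose_herm mult_2)
  have Phi: "lossless_reciprocal (L + K) Phi"
    using lossless_reciprocal_four_block[OF U1 U2 unitary_mat_column_blocks[OF U_unit KL, folded U1_def U2_def]]
    by (simp add: Phi_def add.commute)
  have F: "sub_block Theta K K 0 K = herm V"
    unfolding Theta_def by (rule sub_block_four_block_mat_lower_left) (use V in auto)
  have W: "sub_block Phi K L 0 K = U1"
    unfolding Phi_def by (rule sub_block_four_block_mat_lower_left) (use U1 U2 in auto)
  define D where "D = mat K K (\<lambda>(i, j). if i = j then S $$ (i, i) else 0)"
  have D: "D \<in> carrier_mat K K"
    by (simp add: D_def)
  have "Psqrt = 4 \<cdot>\<^sub>m D"
    by (rule eq_matI) (auto simp: Psqrt_def D_def)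
  then have "((1/2 :: complex) \<cdot>\<^sub>m U1) * Psqrt * ((1/2 :: complex) \<cdot>\<^sub>m herm V) = U1 * D * herm V"
    using U1 D V by (simp add: mult_smult_assoc_mat[of _ L K _ K] mult_smult_distrib[of _ L K _ K]
        smult_smult_mat)
  also have "U1 * D = U * S"
    unfolding U1_def D_def by (rule mult_rectangular_diagonal[OF U S_dim KL S_diag])
  finally have "((1/2 :: complex) \<cdot>\<^sub>m U1) * Psqrt * ((1/2 :: complex) \<cdot>\<^sub>m herm V) = Pd"
    unfolding svd .
  then show ?thesis
    using Theta Phi F W by (simp add: Let_def)
qed

end
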